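(* Let $(\mathscr{S},\mathscr{C},\mathscr{R},K)$ be a PL-RDK system with kinetic order vectors $T_{.y}$. Suppose there exist $\kappa\in\mathbb{R}^{\mathscr{R}}_{>0}$ and a nonzero $\mu\in\mathbb{R}^{\mathscr{S}}$ that is stoichiometrically compatible with $S$ such that $$\sum_{y\to y'\in\mathscr{R}}\kappa_{y\to y'}(y'-y)=0,\qquad \sum_{y\to y'\in\mathscr{R}}\kappa_{y\to y'}e^{T_{.y}\cdot\mu}(y'-y)=0.$$ Then there exist positive rate constants $\{k_{y\to y'}\}_{y\to y'\in\mathscr{R}}$ (with the kinetic orders unchanged) and two distinct positive, stoichiometrically compatible vectors $c^*,c^{**}\in\mathbb{R}^{\mathscr{S}}_{>0}$ which are both equilibria of the resulting power-law system.
   Context: A chemical reaction network $(\mathscr{S},\mathscr{C},\mathscr{R})$ has finite sets of species, complexes (vectors in $\mathbb{R}^{\mathscr{S}}_{\ge0}$) and reactions $y\to y'$; its stoichiometric subspace is $S=\mathrm{span}\{y'-y: y\to y'\in\mathscr{R}\}$. A power-law kinetics assigns to each reaction $r$ the rate $K_r(x)=k_r x^{F_r}=k_r\prod_s x_s^{F_{rs}}$ with rate constant $k_r>0$ and real kinetic order row $F_r\in\mathbb{R}^{\mathscr{S}}$. The system is PL-RDK (power-law reactant-determined kinetics) if any two reactions with the same reactant complex have identical kinetic order rows; then for each reactant complex $y$ one writes $T_{.y}\in\mathbb{R}^{\mathscr{S}}$ for this common row. The dynamics is $dx/dt=f(x)=\sum_{y\to y'\in\mathscr{R}}k_{y\to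 y'}x^{T_{.y}}(y'-y)$; an equilibrium is a zero of $f$. Two vectors $x,x^*$ are stoichiometrically compatible if $x-x^*\in S$. A vector $x\in\mathbb{R}^{\mathscr{S}}$ is stoichiometrically compatible with $S$ if there is $\sigma\in S$ with $\mathrm{sign}(x_s)=\mathrm{sign}(\sigma_s)$ for all $s\in\mathscr{S}$. *)

theory Defs
  imports "HOL-Analysis.Analysis"
begin

text \<open>Power-law reactant-determined kinetics: the kinetic order row of a reaction
is a function T of its reactant complex only (T y is the row T_{.y}).\<close>

type_synonym 's complex = "real ^ 's"
type_synonym 's reaction = "'s complex \<times> 's complex"

definition crn :: "'s::finite reaction set \<Rightarrow> bool" where
  "crn R \<longleftrightarrow> finite R \<and> (\<forall>(y, y') \<in> R. (\<forall>s. y $ s \<ge> 0) \<and> (\<forall>s. y' $ s \<ge> 0) \<and> y \<noteq> y')"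

definition stoich_subspace :: "'s::finite reaction set \<Rightarrow> (real ^ 's) set" where
  "stoich_subspace R = span ((\<lambda>(y, y'). y' - y) ` R)"

definition pl_monomial :: "real ^ 's::finite \<Rightarrow> real ^ 's \<Rightarrow> real" where
  "pl_monomial x F = (\<Prod>s\<in>UNIV. (x $ s) powr (F $ s))"

definition plrdk_f ::
  "'s::finite reaction set \<Rightarrow> ('s complex \<Rightarrow> real ^ 's) \<Rightarrow> ('s reaction \<Rightarrow> real)
     \<Rightarrow> real ^ 's \<Rightarrow> real ^ 's" where
  "plrdk_f R T k x = (\<Sum>r\<in>R. (k r * pl_monomial x (T (fst r))) *\<^sub>R (snd r - fst r))"

definition is_equilibrium ::
  "'s::finite reaction set \<Rightarrow> ('s complex \<Rightarrow> real ^ 's) \<Rightarrow> ('s reaction \<Rightarrow> real)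
     \<Rightarrow> real ^ 's \<Rightarrow> bool" where
  "is_equilibrium R T k x \<longleftrightarrow> plrdk_f R T k x = 0"

text \<open>x is stoichiometrically compatible with S: some sigma in S has the same sign pattern.\<close>
definition sign_compatible :: "real ^ 's::finite \<Rightarrow> (real ^ 's) set \<Rightarrow> bool" where
  "sign_compatible x S \<longleftrightarrow> (\<exists>\<sigma>\<in>S. \<forall>s. sgn (x $ s) = sgn (\<sigma> $ s))"

end

theory Submission
  imports Defs
begin

text \<open>Take c positive and c' = c e^\<mu> componentwise. Then c'^F = c^F e^(F\<bullet>\<mu>), so with
  the rate constants k r = \<kappa> r / c^(T y) the formation rates at c and c' are exactly the two
  sums assumed to vanish. To make c' - c lie in S, solve c_s (e^\<mu>_s - 1) = \<sigma>_s for some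
  \<sigma> \<in> S with the sign pattern of \<mu>: since e^\<mu>_s - 1 has the sign of \<mu>_s, the solution is
  positive.\<close>

definition scale_exp :: "real ^ 's::finite \<Rightarrow> real ^ 's \<Rightarrow> real ^ 's" where
  "scale_exp c \<mu> = (\<chi> s. c $ s * exp (\<mu> $ s))"

lemma pl_monomial_pos: "(\<forall>s. c $ s > 0) \<Longrightarrow> pl_monomial c F > 0"
  unfolding pl_monomial_def by (intro prod_pos) (metis less_irrefl powr_gt_zero)

lemma pl_monomial_scale_exp:
  assumes "\<forall>s. c $ s > 0"
  shows "pl_monomial (scale_exp c \<mu>) F = pl_monomial c F * exp (F \<bullet> \<mu>)"
proof -
  have "pl_monomial (scale_exp c \<mu>) F = (\<Prod>s\<in>UNIV. (c $ s) powr (F $ s) * exp (F $ s * \<mu> $ s))"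
    unfolding pl_monomial_def scale_exp_def
    by (rule prod.cong) (use assms in \<open>auto simp: powr_mult exp_powr_real mult.commute\<close>)
  also have "\<dots> = pl_monomial c F * (\<Prod>s\<in>UNIV. exp (F $ s * \<mu> $ s))"
    unfolding pl_monomial_def by (rule prod.distrib)
  also have "(\<Prod>s\<in>UNIV. exp (F $ s * \<mu> $ s)) = exp (F \<bullet> \<mu>)"
    by (simp add: inner_vec_def exp_sum)
  finally show ?thesis .
qed

lemma plrdk_f_rescaled_rates:
  assumes "\<forall>s. c $ s > 0"
  shows "plrdk_f R T (\<lambda>r. \<kappa> r / pl_monomial c (T (fst r))) (scale_exp c \<mu>)
         = (\<Sum>r\<in>R. (\<kappa> r * exp (T (fst r) \<bullet> \<mu>)) *\<^sub>R (snd r - fst r))"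
  unfolding plrdk_f_def pl_monomial_scale_exp[OF assms]
  by (rule sum.cong) (use pl_monomial_pos[OF assms] in \<open>auto simp: less_imp_neq[symmetric]\<close>)

lemma scale_exp_zero [simp]: "scale_exp c 0 = c"
  by (simp add: scale_exp_def vec_eq_iff)

lemma scale_exp_eq_iff:
  assumes "\<forall>s. c $ s > 0"
  shows "scale_exp c \<mu> = c \<longleftrightarrow> \<mu> = 0"
  using assms by (auto simp: scale_exp_def vec_eq_iff) (metis exp_eq_one_iff less_irrefl mult_cancel_left1)

lemma exp_minus_one_solution_pos:
  fixes m t :: real
  assumes "sgn m = sgn t" and "m \<noteq> 0"
  shows "t / (exp m - 1) > 0"
proof (cases "m > 0")
  case True
  with assms show ?thesis by (auto simp: sgn_if split: if_splits)
next
  case False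
  with assms have "m < 0" "t < 0" by (auto simp: sgn_if split: if_splits)
  then show ?thesis by (simp add: divide_neg_neg)
qed

lemma sign_compatible_scale_exp_diff:
  assumes "subspace S" and "sign_compatible \<mu> S"
  obtains c where "\<forall>s. c $ s > 0" and "c - scale_exp c \<mu> \<in> S"
proof -
  obtain \<sigma> where "\<sigma> \<in> S" and sg: "\<And>s. sgn (\<mu> $ s) = sgn (\<sigma> $ s)"
    using assms(2) unfolding sign_compatible_def by blast
  define c where "c = (\<chi> s. if \<mu> $ s = 0 then 1 else \<sigma> $ s / (exp (\<mu> $ s) - 1))"
  have "\<forall>s. c $ s > 0"
    using exp_minus_one_solution_pos[OF sg] by (simp add: c_def)
  moreover have "scale_exp c \<mu> - c = \<sigma>"
  proof -
    have "\<sigma> $ s = 0" if "\<mu> $ s = 0" for s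
      using sg[of s] that by (simp add: sgn_0_0)
    moreover have "x * exp m / (exp m - 1) - x / (exp m - 1) = x" if "m \<noteq> 0" for x m :: real
    proof -
      have "x * exp m / (exp m - 1) - x / (exp m - 1) = x * (exp m - 1) / (exp m - 1)"
        by (simp add: diff_divide_distrib right_diff_distrib)
      also have "\<dots> = x"
        using that by simp
      finally show ?thesis .
    qed
    ultimately show ?thesis
      by (simp add: vec_eq_iff scale_exp_def c_def)
  qed
  then have "c - scale_exp c \<mu> \<in> S"
    using \<open>\<sigma> \<in> S\<close> assms(1) by (metis minus_diff_eq subspace_neg)
  ultimately show thesis by (rule that)
qed

theorem lemma2p2:
  fixes R :: "'s::finite reaction set"
    and T :: "'s complex \<Rightarrow> real ^ 's"
    and \<kappa> :: "'s reaction \<Rightarrow> real"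
    and \<mu> :: "real ^ 's"
  assumes "crn R"
    and "\<forall>r\<in>R. \<kappa> r > 0"
    and "\<mu> \<noteq> 0"
    and "sign_compatible \<mu> (stoich_subspace R)"
    and "(\<Sum>r\<in>R. \<kappa> r *\<^sub>R (snd r - fst r)) = 0"
    and "(\<Sum>r\<in>R. (\<kappa> r * exp (T (fst r) \<bullet> \<mu>)) *\<^sub>R (snd r - fst r)) = 0"
  shows "\<exists>k. (\<forall>r\<in>R. k r > 0) \<and>
           (\<exists>c1 c2. (\<forall>s. c1 $ s > 0) \<and> (\<forall>s. c2 $ s > 0) \<and> c1 \<noteq> c2 \<and>
              c1 - c2 \<in> stoich_subspace R \<and>
              is_equilibrium R T k c1 \<and> is_equilibrium R T k c2)"
proof -
  have "subspace (stoich_subspace R)"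
    unfolding stoich_subspace_def by (rule subspace_span)
  then obtain c where c_pos: "\<forall>s. c $ s > 0" and c_compat: "c - scale_exp c \<mu> \<in> stoich_subspace R"
    using assms(4) sign_compatible_scale_exp_diff by blast
  define k where "k = (\<lambda>r. \<kappa> r / pl_monomial c (T (fst r)))"
  have "\<forall>r\<in>R. k r > 0"
    using assms(2) pl_monomial_pos[OF c_pos] by (simp add: k_def)
  moreover have "\<forall>s. scale_exp c \<mu> $ s > 0"
    using c_pos by (simp add: scale_exp_def)
  moreover have "c \<noteq> scale_exp c \<mu>"
    using scale_exp_eq_iff[OF c_pos] assms(3) by metis
  moreover have "is_equilibrium R T k c"
    using plrdk_f_rescaled_rates[OF c_pos, of R T \<kappa> 0] assms(5)
    by (simp add: is_equilibrium_def k_def)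
  moreover have "is_equilibrium R T k (scale_exp c \<mu>)"
    using plrdk_f_rescaled_rates[OF c_pos, of R T \<kappa> \<mu>] assms(6)
    by (simp add: is_equilibrium_def k_def)
  ultimately show ?thesis
    using c_pos c_compat by blast
qed

end
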